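(* Let $\nabla:\Omega(A)\to\Omega(A)\otimes_A\Omega(A)$ be a module connection with associated affine connection $(\mathsf K_\nabla,\mathsf H_\nabla)$ and torsion $\mathsf V$. Then for all $a\in A$, $2\,\widehat\nabla(\mathsf d(a))=\widehat\phi(\mathsf V(\mathsf d(a)))$.
   Context: Fix a commutative ring $R$ and a commutative $R$-algebra $A$; $\Omega(A)$ is the Kähler module of $A$ over $R$ with universal derivation $\mathsf d$, and $\Omega^2(A)=\Omega(A)\wedge_A\Omega(A)$. A module connection on $\Omega(A)$ is an $R$-linear $\nabla:\Omega(A)\to\Omega(A)\otimes_A\Omega(A)$ with $\nabla(a\alpha)=a\nabla(\alpha)+\mathsf d(a)\otimes\alpha$. $\mathsf T(A)=\mathrm{Sym}_A(\Omega(A))$ (which equals the symmetric algebra $\mathsf S_A(\Omega(A))$), $\mathsf T^2(A)=\mathsf T(\mathsf T(A))$ with universal derivation $\mathsf d':\mathsf T(A)\to\mathsf T^2(A)$, generated over $A$ by $\mathsf d(a),\mathsf d'(a),\mathsf d'\mathsf d(a)$; $\mathsf c_A:\mathsf T^2(A)\to\mathsf T^2(A)$ is the algebra map $a\mapsto a$, $\mathsf d(a)\mapsto\mathsf d'(a)$, $\mathsf d'(a)\mapsto\mathsf d(a)$, $\mathsf d'\mathsf d(a)\mapsto\mathsf d'\mathsf d(a)$. The associated affine connection (a tangent category connection on the tangent bundle of $A$ in affine schemes) has vertical part the algebra map $\mathsf K_\nabla:\mathsf T(A)\to\mathsf T^2(A)$, $a\mapsto a$, $\mathsf d(a)\mapsto\mathsf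 d'\mathsf d(a)-U'(\nabla(\mathsf d a))$, and horizontal part $\mathsf H_\nabla:\mathsf T^2(A)\to\mathsf T(A)\otimes_A\mathsf T(A)$ with $\mathsf H_\nabla(\mathsf d'\mathsf d(a))=\nabla(\mathsf d(a))$, where $U':\mathsf T(A)\otimes_A\mathsf T(A)\to\mathsf T^2(A)$ is the algebra map $w\otimes v\mapsto\mathsf T(\mathsf p_A)(w)\,v$ with $\mathsf T(\mathsf p_A)(a)=a$, $\mathsf T(\mathsf p_A)(\mathsf d a)=\mathsf d'(a)$ (so $\mathsf d(b)\otimes\mathsf d(c)\mapsto\mathsf d'(b)\mathsf d(c)$). The torsion of this affine connection (computed from the horizontal connection) is the algebra map $\mathsf V:\mathsf T(A)\to\mathsf T^2(A)$ with $\mathsf V(a)=a$ and $\mathsf V(\mathsf d(a))=\mathsf c_A\big(U'(\mathsf H_\nabla(\mathsf d'\mathsf d a))\big)-U'\big(\mathsf H_\nabla(\mathsf c_A(\mathsf d'\mathsf d a))\big)$; the connection is torsion-free if $\mathsf V(\mathsf d(a))=0$ for all $a\in A$. The torsion of $\nabla$ is $\widehat\nabla=\omega\circ\nabla:\Omega(A)\to\Omega^2(A)$ with $\omega(\alpha\otimes\beta)=\alpha\wedge\beta$. The map $\widehat\phi:\mathsf T^2(A)\to\Omega^2(A)$ is the additive map sending each monomial of the form $a\,\mathsf d(b)\mathsf d'(c)$ ($a,b,c\in A$) to $a\,\mathsf d(b)\wedge\mathsf d(c)$ and all monomials of other forms to $0$. *)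

theory Defs
  imports Main "HOL.Modules" "HOL-Library.Poly_Mapping"
begin

text \<open>
  Concrete presentations (by generators and relations) of the objects in the statement.
  A is a type 'a :: comm_ring_1, R a type 'r :: comm_ring_1, and the R-algebra structure
  is a ring homomorphism f :: 'r => 'a.  All objects are realised inside one polynomial
  ring over A whose variables are symbols
     D a   (the element d(a)),   D' a  (the element d'(a)),   DD a  (the element d'd(a)),
     L a   (left tensor factor d(a) in T(A) (x)_A T(A) and in Omega(A) (x)_A Omega(A)).
  The right tensor factor d(c) is written with the symbol D c.
  Elements of the quotient objects are represented by polynomials; equality in the
  quotient object is congruence modulo the relevant submodule / ideal.
\<close>

datatype 'a sym = D 'a | D' 'a | DD 'a | L 'a

type_synonym 'a pol = "('a sym \<Rightarrow>\<^sub>0 nat) \<Rightarrow>\<^sub>0 'a"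

definition Cst :: "'a::comm_ring_1 \<Rightarrow> 'a pol" where
  "Cst a = Poly_Mapping.single 0 a"

definition Var :: "'a sym \<Rightarrow> 'a::comm_ring_1 pol" where
  "Var v = Poly_Mapping.single (Poly_Mapping.single v 1) 1"

definition Aspan :: "'a::comm_ring_1 pol set \<Rightarrow> 'a pol set" where
  "Aspan G = module.span (\<lambda>a p. Cst a * p) G"

definition Ideal :: "'a::comm_ring_1 pol set \<Rightarrow> 'a pol set" where
  "Ideal G = module.span (*) G"

definition peval :: "('a sym \<Rightarrow> 'a::comm_ring_1 pol) \<Rightarrow> 'a pol \<Rightarrow> 'a pol" where
  "peval \<sigma> p = (\<Sum>m\<in>Poly_Mapping.keys p.
       Cst (Poly_Mapping.lookup p m) *
       (\<Prod>v\<in>Poly_Mapping.keys m. \<sigma> v ^ Poly_Mapping.lookup m v))"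

definition ring_hom_fun :: "('r::comm_ring_1 \<Rightarrow> 'a::comm_ring_1) \<Rightarrow> bool" where
  "ring_hom_fun f \<longleftrightarrow> f 1 = 1 \<and> (\<forall>x y. f (x + y) = f x + f y) \<and> (\<forall>x y. f (x * y) = f x * f y)"

definition kahler_rels :: "('r \<Rightarrow> 'a::comm_ring_1) \<Rightarrow> ('a \<Rightarrow> 'a sym) \<Rightarrow> 'a pol set" where
  "kahler_rels f tag =
     {Var (tag (a + b)) - Var (tag a) - Var (tag b) | a b. True}
   \<union> {Var (tag (a * b)) - Cst a * Var (tag b) - Cst b * Var (tag a) | a b. True}
   \<union> {Var (tag (f r)) | r. True}"

text \<open>Relations for d'd coming from applying d' to the Kaehler relations of T(A).\<close>
definition dd_rels :: "('r \<Rightarrow> 'a::comm_ring_1) \<Rightarrow> 'a pol set" where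
  "dd_rels f =
     {Var (DD (a + b)) - Var (DD a) - Var (DD b) | a b. True}
   \<union> {Var (DD (a * b)) - (Var (D' a) * Var (D b) + Cst a * Var (DD b)
                           + Var (D' b) * Var (D a) + Cst b * Var (DD a)) | a b. True}
   \<union> {Var (DD (f r)) | r. True}"

text \<open>Omega(A): A-linear combinations of the symbols d(a), modulo the Kaehler relations.\<close>
definition Omega_reps :: "'a::comm_ring_1 pol set" where
  "Omega_reps = Aspan (range (\<lambda>a. Var (D a)))"

definition Omega_rel :: "('r \<Rightarrow> 'a::comm_ring_1) \<Rightarrow> 'a pol set" where
  "Omega_rel f = Aspan (kahler_rels f D)"

text \<open>Omega(A) (x)_A Omega(A): A-combinations of d(b) (x) d(c) = L b * D c, modulo the
  relations of either factor.\<close>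
definition tens_reps :: "'a::comm_ring_1 pol set" where
  "tens_reps = Aspan {Var (L b) * Var (D c) | b c. True}"

definition tens_rel_gens :: "('r \<Rightarrow> 'a::comm_ring_1) \<Rightarrow> 'a pol set" where
  "tens_rel_gens f = {g * Var (D c) | g c. g \<in> kahler_rels f L}
                   \<union> {Var (L b) * g | b g. g \<in> kahler_rels f D}"

definition tens_rel :: "('r \<Rightarrow> 'a::comm_ring_1) \<Rightarrow> 'a pol set" where
  "tens_rel f = Aspan (tens_rel_gens f)"

text \<open>Omega^2(A) = Omega(A) wedge Omega(A): quotient of Omega (x) Omega by the span of all
  alpha (x) alpha, i.e. by the span of d(b)(x)d(b) and d(b)(x)d(c) + d(c)(x)d(b).
  The map omega(alpha (x) beta) = alpha wedge beta is the identity on representatives.\<close>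
definition wedge_rel :: "('r \<Rightarrow> 'a::comm_ring_1) \<Rightarrow> 'a pol set" where
  "wedge_rel f = Aspan (tens_rel_gens f
      \<union> {Var (L b) * Var (D b) | b. True}
      \<union> {Var (L b) * Var (D c) + Var (L c) * Var (D b) | b c. True})"

text \<open>T(A) (x)_A T(A) = Sym(Omega) (x) Sym(Omega): polynomials in L, D modulo the ideal
  generated by the Kaehler relations of both factors.\<close>
definition TT_ideal :: "('r \<Rightarrow> 'a::comm_ring_1) \<Rightarrow> 'a pol set" where
  "TT_ideal f = Ideal (kahler_rels f L \<union> kahler_rels f D)"

text \<open>T^2(A) = T(T(A)): polynomials in D, D', DD modulo the ideal of relations.\<close>
definition T2_poly :: "'a::comm_ring_1 pol \<Rightarrow> bool" where
  "T2_poly p \<longleftrightarrow> (\<forall>m\<in>Poly_Mapping.keys p. \<forall>v\<in>Poly_Mapping.keys m. \<forall>b. v \<noteq> L b)"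

definition T2_ideal :: "('r \<Rightarrow> 'a::comm_ring_1) \<Rightarrow> 'a pol set" where
  "T2_ideal f = Ideal (kahler_rels f D \<union> kahler_rels f D' \<union> dd_rels f)"

definition cA :: "'a::comm_ring_1 pol \<Rightarrow> 'a pol" where
  "cA = peval (\<lambda>v. case v of D a \<Rightarrow> Var (D' a) | D' a \<Rightarrow> Var (D a)
                              | DD a \<Rightarrow> Var (DD a) | L a \<Rightarrow> Var (L a))"

text \<open>U' : T(A) (x) T(A) -> T^2(A), w (x) v |-> T(p_A)(w) v, i.e. L a |-> d'(a), D a |-> d(a).\<close>
definition Uprime :: "'a::comm_ring_1 pol \<Rightarrow> 'a pol" where
  "Uprime = peval (\<lambda>v. case v of L a \<Rightarrow> Var (D' a) | _ \<Rightarrow> Var v)"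

definition phi_hat :: "'a::comm_ring_1 pol \<Rightarrow> 'a pol" where
  "phi_hat p = (\<Sum>m\<in>Poly_Mapping.keys p.
      \<Sum>(b, c)\<in>{(b, c). m = Poly_Mapping.single (D b) 1 + Poly_Mapping.single (D' c) 1}.
         Cst (Poly_Mapping.lookup p m) * Var (L b) * Var (D c))"

definition module_connection :: "('r \<Rightarrow> 'a::comm_ring_1) \<Rightarrow> ('a pol \<Rightarrow> 'a pol) \<Rightarrow> bool" where
  "module_connection f nabla \<longleftrightarrow>
     (\<forall>p\<in>Omega_reps. nabla p \<in> tens_reps) \<and>
     (\<forall>p\<in>Omega_reps. \<forall>q\<in>Omega_reps. p - q \<in> Omega_rel f \<longrightarrow> nabla p - nabla q \<in> tens_rel f) \<and>
     (\<forall>p\<in>Omega_reps. \<forall>q\<in>Omega_reps. nabla (p + q) - (nabla p + nabla q) \<in> tens_rel f) \<and>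
     (\<forall>r. \<forall>p\<in>Omega_reps. nabla (Cst (f r) * p) - Cst (f r) * nabla p \<in> tens_rel f) \<and>
     (\<forall>a. \<forall>p\<in>Omega_reps. nabla (Cst a * p) - (Cst a * nabla p + Var (L a) * p) \<in> tens_rel f)"

definition horizontal_part :: "('r \<Rightarrow> 'a::comm_ring_1) \<Rightarrow> ('a pol \<Rightarrow> 'a pol) \<Rightarrow> ('a pol \<Rightarrow> 'a pol) \<Rightarrow> bool" where
  "horizontal_part f nabla H \<longleftrightarrow>
     (\<forall>p q. T2_poly p \<and> T2_poly q \<and> p - q \<in> T2_ideal f \<longrightarrow> H p - H q \<in> TT_ideal f) \<and>
     (\<forall>a. H (Var (DD a)) - nabla (Var (D a)) \<in> TT_ideal f)"

definition torsion_V :: "('a::comm_ring_1 pol \<Rightarrow> 'a pol) \<Rightarrow> 'a \<Rightarrow> 'a pol" where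
  "torsion_V H a = cA (Uprime (H (Var (DD a)))) - Uprime (H (cA (Var (DD a))))"

text \<open>Torsion of nabla: nabla-hat = omega o nabla (omega is the identity on representatives,
  the target being read in Omega^2(A), i.e. modulo wedge_rel).\<close>
definition nabla_hat :: "('a::comm_ring_1 pol \<Rightarrow> 'a pol) \<Rightarrow> 'a pol \<Rightarrow> 'a pol" where
  "nabla_hat nabla p = nabla p"

definition wedge_eq :: "('r \<Rightarrow> 'a::comm_ring_1) \<Rightarrow> 'a pol \<Rightarrow> 'a pol \<Rightarrow> bool" where
  "wedge_eq f p q \<longleftrightarrow> p - q \<in> wedge_rel f"

end

theory Submission
  imports Defs
begin

text \<open>
  Write \<open>\<phi>\<close> for \<open>phi_hat\<close> and put \<open>\<psi> = \<phi> \<circ> c\<^sub>A \<circ> U' - \<phi> \<circ> U'\<close>; since \<open>c\<^sub>A\<close> fixes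
  \<open>d'd a\<close>, the torsion gives \<open>\<phi> (V (d a)) = \<psi> (H (d'd a))\<close>. On a simple tensor, \<open>U'\<close> sends
  \<open>d b \<otimes> d c\<close> to \<open>d'(b) d(c)\<close> and \<open>c\<^sub>A\<close> turns this into \<open>d(b) d'(c)\<close>, so
  \<open>\<psi> (d b \<otimes> d c) = d b \<and> d c - d c \<and> d b = 2 (d b \<and> d c)\<close> in \<open>\<Omega>\<^sup>2(A)\<close>: on
  \<open>\<Omega>(A) \<otimes> \<Omega>(A)\<close> the map \<open>\<psi>\<close> is twice the wedge map.
  Moreover \<open>\<psi>\<close> sends the relation ideal of \<open>T(A) \<otimes> T(A)\<close> to tensor relations: \<open>U'\<close> and
  \<open>c\<^sub>A\<close> carry Kaehler relations to Kaehler relations in \<open>d\<close> or \<open>d'\<close>, and \<open>\<phi>\<close> of a multiple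
  of such a relation only sees its products with a single \<open>d'(c)\<close> (resp. \<open>d(b)\<close>), which
  are tensor relations. As \<open>H (d'd a) \<equiv> \<nabla> (d a)\<close> modulo that ideal,
  \<open>\<phi> (V (d a)) = \<psi> (\<nabla> (d a)) = 2 \<omega> (\<nabla> (d a))\<close>.
\<close>

lemma Cst_add: "Cst (a + b) = Cst a + Cst b"
  by (simp add: Cst_def single_add)

lemma Cst_mult: "Cst (a * b) = Cst a * Cst b"
  by (simp add: Cst_def mult_single)

lemma Cst_one [simp]: "Cst 1 = 1"
  by (simp add: Cst_def)

lemma Cst_zero [simp]: "Cst 0 = 0"
  by (simp add: Cst_def)

abbreviation dl :: "'a sym \<Rightarrow> ('a sym \<Rightarrow>\<^sub>0 nat)" where
  "dl v \<equiv> Poly_Mapping.single v 1"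

lemma single_mult_Var: "Poly_Mapping.single m e * Var v = Poly_Mapping.single (m + dl v) e"
  by (simp add: Var_def mult_single)

lemma single_mult_Cst_Var:
  "Poly_Mapping.single m e * (Cst k * Var v) = Poly_Mapping.single (m + dl v) (e * k)"
  by (simp add: Var_def Cst_def mult_single)

lemma Cst_mult_Var_mult_Var: "Cst k * (Var u * Var v) = Poly_Mapping.single (dl u + dl v) k"
  by (simp add: Cst_def Var_def mult_single)

lemma poly_mapping_sum_single:
  "p = (\<Sum>m\<in>Poly_Mapping.keys p. Poly_Mapping.single m (Poly_Mapping.lookup p m))"
  by (rule poly_mapping_eqI) (simp add: lookup_sum lookup_single when_def in_keys_iff)

lemma sum_keys_add:
  fixes g :: "'k \<Rightarrow> 'c::comm_monoid_add \<Rightarrow> 'd::comm_monoid_add"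
  assumes zero: "\<And>m. g m 0 = 0" and add: "\<And>m x y. g m (x + y) = g m x + g m y"
  shows "(\<Sum>m\<in>Poly_Mapping.keys (p + q). g m (Poly_Mapping.lookup (p + q) m))
       = (\<Sum>m\<in>Poly_Mapping.keys p. g m (Poly_Mapping.lookup p m))
       + (\<Sum>m\<in>Poly_Mapping.keys q. g m (Poly_Mapping.lookup q m))"
proof -
  let ?S = "Poly_Mapping.keys p \<union> Poly_Mapping.keys q"
  have extend: "(\<Sum>m\<in>Poly_Mapping.keys r. g m (Poly_Mapping.lookup r m))
              = (\<Sum>m\<in>?S. g m (Poly_Mapping.lookup r m))" if "Poly_Mapping.keys r \<subseteq> ?S" for r
    using that by (intro sum.mono_neutral_left) (auto simp: in_keys_iff zero)
  have "(\<Sum>m\<in>Poly_Mapping.keys (p + q). g m (Poly_Mapping.lookup (p + q) m))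
      = (\<Sum>m\<in>?S. g m (Poly_Mapping.lookup p m) + g m (Poly_Mapping.lookup q m))"
    by (subst extend) (use keys_add[of p q] in \<open>simp_all add: lookup_add add\<close>)
  then show ?thesis
    by (simp add: extend sum.distrib)
qed

definition monom_eval :: "('a sym \<Rightarrow> 'a::comm_ring_1 pol) \<Rightarrow> ('a sym \<Rightarrow>\<^sub>0 nat) \<Rightarrow> 'a pol" where
  "monom_eval \<sigma> m = (\<Prod>v\<in>Poly_Mapping.keys m. \<sigma> v ^ Poly_Mapping.lookup m v)"

lemma monom_eval_add: "monom_eval \<sigma> (m + n) = monom_eval \<sigma> m * monom_eval \<sigma> n"
proof -
  let ?S = "Poly_Mapping.keys m \<union> Poly_Mapping.keys n"
  have extend: "monom_eval \<sigma> k = (\<Prod>v\<in>?S. \<sigma> v ^ Poly_Mapping.lookup k v)"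
    if "Poly_Mapping.keys k \<subseteq> ?S" for k
    unfolding monom_eval_def using that
    by (intro prod.mono_neutral_left) (auto simp: in_keys_iff)
  show ?thesis
    using keys_add[of m n]
    by (simp add: extend lookup_add power_add prod.distrib)
qed

lemma peval_eq_monom_eval:
  "peval \<sigma> p = (\<Sum>m\<in>Poly_Mapping.keys p. Cst (Poly_Mapping.lookup p m) * monom_eval \<sigma> m)"
  by (simp add: peval_def monom_eval_def)

lemma peval_add: "peval \<sigma> (p + q) = peval \<sigma> p + peval \<sigma> q"
  unfolding peval_eq_monom_eval by (rule sum_keys_add) (simp_all add: Cst_add distrib_right)

interpretation peval: additive "peval \<sigma>"
  by unfold_locales (rule peval_add)

lemma peval_single: "peval \<sigma> (Poly_Mapping.single m e) = Cst e * monom_eval \<sigma> m"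
  by (simp add: peval_eq_monom_eval)

lemma peval_mult: "peval \<sigma> (p * q) = peval \<sigma> p * peval \<sigma> q"
proof -
  let ?P = "Poly_Mapping.keys p" and ?Q = "Poly_Mapping.keys q"
  let ?p = "Poly_Mapping.lookup p" and ?q = "Poly_Mapping.lookup q"
  have "p * q = (\<Sum>m\<in>?P. \<Sum>n\<in>?Q. Poly_Mapping.single m (?p m) * Poly_Mapping.single n (?q n))"
    by (subst poly_mapping_sum_single[of p], subst poly_mapping_sum_single[of q])
       (simp add: sum_product)
  then have "peval \<sigma> (p * q)
      = (\<Sum>m\<in>?P. \<Sum>n\<in>?Q. (Cst (?p m) * monom_eval \<sigma> m) * (Cst (?q n) * monom_eval \<sigma> n))"
    by (simp add: peval.sum mult_single peval_single monom_eval_add Cst_mult ac_simps)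
  also have "\<dots> = peval \<sigma> p * peval \<sigma> q"
    by (simp add: peval_eq_monom_eval sum_product)
  finally show ?thesis .
qed

lemma peval_Var [simp]: "peval \<sigma> (Var v) = \<sigma> v"
  by (simp add: Var_def peval_single monom_eval_def)

lemma peval_Cst [simp]: "peval \<sigma> (Cst c) = Cst c"
  by (simp add: Cst_def peval_single monom_eval_def)

definition phi_monom :: "('a sym \<Rightarrow>\<^sub>0 nat) \<Rightarrow> 'a::comm_ring_1 \<Rightarrow> 'a pol" where
  "phi_monom m e = (\<Sum>(b, c)\<in>{(b, c). m = dl (D b) + dl (D' c)}. Cst e * Var (L b) * Var (D c))"

lemma phi_hat_eq_phi_monom:
  "phi_hat p = (\<Sum>m\<in>Poly_Mapping.keys p. phi_monom m (Poly_Mapping.lookup p m))"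
  by (simp add: phi_hat_def phi_monom_def)

lemma phi_hat_add: "phi_hat (p + q) = phi_hat p + phi_hat q"
  unfolding phi_hat_eq_phi_monom
  by (rule sum_keys_add) (simp_all add: phi_monom_def Cst_add distrib_right sum.distrib split_def)

interpretation phi_hat: additive phi_hat
  by unfold_locales (rule phi_hat_add)

lemma phi_hat_single: "phi_hat (Poly_Mapping.single m e) = phi_monom m e"
  by (simp add: phi_hat_eq_phi_monom phi_monom_def)

lemma dl_D_D'_eq_iff: "dl (D b) + dl (D' c) = dl (D b') + dl (D' c') \<longleftrightarrow> b = b' \<and> c = c'"
proof
  assume eq: "dl (D b) + dl (D' c) = dl (D b') + dl (D' c')"
  have "Poly_Mapping.lookup (dl (D b) + dl (D' c)) v
      = Poly_Mapping.lookup (dl (D b') + dl (D' c')) v" for v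
    using eq by simp
  from this[of "D b"] this[of "D' c"] show "b = b' \<and> c = c'"
    by (auto simp: lookup_add lookup_single when_def split: if_splits)
qed simp

lemma phi_monom_D_D': "phi_monom (dl (D b) + dl (D' c)) e = Cst e * Var (L b) * Var (D c)"
proof -
  have "{(b', c'). dl (D b) + dl (D' c) = dl (D b') + dl (D' c')} = {(b, c)}"
    by (simp only: dl_D_D'_eq_iff) auto
  then show ?thesis
    unfolding phi_monom_def by simp
qed

lemma phi_monom_D'_D: "phi_monom (dl (D' c) + dl (D b)) e = Cst e * Var (L b) * Var (D c)"
  using phi_monom_D_D'[of b c e] by (simp add: add.commute)

lemma add_dl_D_eq_D_D': "m + dl (D y) = dl (D b) + dl (D' c) \<Longrightarrow> m = dl (D' c)"
proof -
  assume eq: "m + dl (D y) = dl (D b) + dl (D' c)"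
  then have "Poly_Mapping.lookup (m + dl (D y)) (D y) = Poly_Mapping.lookup (dl (D b) + dl (D' c)) (D y)"
    by simp
  then have "y = b"
    by (auto simp: lookup_add lookup_single when_def split: if_splits)
  with eq show ?thesis
    by (metis add.commute add_right_cancel)
qed

lemma add_dl_D'_eq_D_D': "m + dl (D' y) = dl (D b) + dl (D' c) \<Longrightarrow> m = dl (D b)"
proof -
  assume eq: "m + dl (D' y) = dl (D b) + dl (D' c)"
  then have "Poly_Mapping.lookup (m + dl (D' y)) (D' y) = Poly_Mapping.lookup (dl (D b) + dl (D' c)) (D' y)"
    by simp
  then have "y = c"
    by (auto simp: lookup_add lookup_single when_def split: if_splits)
  with eq show ?thesis
    by (metis add_right_cancel)
qed

lemma phi_monom_add_dl_D:
  assumes "\<And>c. m \<noteq> dl (D' c)"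
  shows "phi_monom (m + dl (D y)) e = 0"
proof -
  have "{(b, c). m + dl (D y) = dl (D b) + dl (D' c)} = {}"
    using assms by (auto dest: add_dl_D_eq_D_D' simp del: One_nat_def)
  then show ?thesis
    unfolding phi_monom_def by simp
qed

lemma phi_monom_add_dl_D':
  assumes "\<And>b. m \<noteq> dl (D b)"
  shows "phi_monom (m + dl (D' y)) e = 0"
proof -
  have "{(b, c). m + dl (D' y) = dl (D b) + dl (D' c)} = {}"
    using assms by (auto dest: add_dl_D'_eq_D_D' simp del: One_nat_def)
  then show ?thesis
    unfolding phi_monom_def by simp
qed

lemma module_Cst_scale: "module (\<lambda>a (p::'a::comm_ring_1 pol). Cst a * p)"
  by unfold_locales (simp_all add: Cst_add Cst_mult algebra_simps)

lemma module_mult: "module ((*) :: 'a::comm_ring_1 pol \<Rightarrow> 'a pol \<Rightarrow> 'a pol)"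
  by unfold_locales (simp_all add: algebra_simps)

lemma Aspan_scale_base: "x \<in> G \<Longrightarrow> Cst e * x \<in> Aspan G"
  unfolding Aspan_def
  by (intro module.span_scale[OF module_Cst_scale] module.span_base[OF module_Cst_scale])

lemma Aspan_zero: "0 \<in> Aspan G"
  unfolding Aspan_def by (rule module.span_zero[OF module_Cst_scale])

lemma Aspan_add: "x \<in> Aspan G \<Longrightarrow> y \<in> Aspan G \<Longrightarrow> x + y \<in> Aspan G"
  unfolding Aspan_def by (rule module.span_add[OF module_Cst_scale])

lemma Aspan_diff: "x \<in> Aspan G \<Longrightarrow> y \<in> Aspan G \<Longrightarrow> x - y \<in> Aspan G"
  unfolding Aspan_def by (rule module.span_diff[OF module_Cst_scale])

lemma Aspan_sum: "(\<And>x. x \<in> A \<Longrightarrow> g x \<in> Aspan G) \<Longrightarrow> sum g A \<in> Aspan G"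
  unfolding Aspan_def by (rule module.span_sum[OF module_Cst_scale])

lemma Aspan_mono: "G \<subseteq> G' \<Longrightarrow> Aspan G \<subseteq> Aspan G'"
  unfolding Aspan_def by (rule module.span_mono[OF module_Cst_scale])

definition L_of_D :: "'a::comm_ring_1 pol \<Rightarrow> 'a pol" where
  "L_of_D = peval (\<lambda>v. case v of D x \<Rightarrow> Var (L x) | _ \<Rightarrow> Var v)"

lemma L_of_D_kahler_rels: "h \<in> kahler_rels f D \<Longrightarrow> L_of_D h \<in> kahler_rels f L"
  unfolding kahler_rels_def L_of_D_def
  by (elim UnE CollectE exE conjE; simp add: peval.diff peval_mult; blast)

lemma cA_kahler_rels_D': "h \<in> kahler_rels f D' \<Longrightarrow> cA h \<in> kahler_rels f D"
  unfolding kahler_rels_def cA_def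
  by (elim UnE CollectE exE conjE; simp add: peval.diff peval_mult; blast)

lemma Uprime_kahler_rels_L: "h \<in> kahler_rels f L \<Longrightarrow> Uprime h \<in> kahler_rels f D'"
  unfolding kahler_rels_def Uprime_def
  by (elim UnE CollectE exE conjE; simp add: peval.diff peval_mult; blast)

lemma Uprime_kahler_rels_D: "h \<in> kahler_rels f D \<Longrightarrow> Uprime h \<in> kahler_rels f D"
  unfolding kahler_rels_def Uprime_def
  by (elim UnE CollectE exE conjE; simp add: peval.diff peval_mult; blast)

lemma cA_kahler_rels_D: "h \<in> kahler_rels f D \<Longrightarrow> cA h \<in> kahler_rels f D'"
  unfolding kahler_rels_def cA_def
  by (elim UnE CollectE exE conjE; simp add: peval.diff peval_mult; blast)

lemma phi_hat_single_D'_mult_kahler_rel: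
  "h \<in> kahler_rels f D \<Longrightarrow>
   phi_hat (Poly_Mapping.single (dl (D' c)) e * h) = Cst e * (L_of_D h * Var (D c))"
  unfolding kahler_rels_def L_of_D_def
  by (elim UnE CollectE exE conjE; simp add: right_diff_distrib single_mult_Var single_mult_Cst_Var
      phi_hat.diff phi_hat_single phi_monom_D'_D peval.diff peval_mult del: One_nat_def;
      simp add: Cst_mult algebra_simps)

lemma phi_hat_single_D_mult_kahler_rel:
  "h \<in> kahler_rels f D' \<Longrightarrow>
   phi_hat (Poly_Mapping.single (dl (D b)) e * h) = Cst e * (Var (L b) * cA h)"
  unfolding kahler_rels_def cA_def
  by (elim UnE CollectE exE conjE; simp add: right_diff_distrib single_mult_Var single_mult_Cst_Var
      phi_hat.diff phi_hat_single phi_monom_D_D' peval.diff peval_mult del: One_nat_def;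
      simp add: Cst_mult algebra_simps)

lemma phi_hat_single_mult_kahler_rel_D_eq_0:
  "h \<in> kahler_rels f D \<Longrightarrow> (\<And>c. m \<noteq> dl (D' c)) \<Longrightarrow> phi_hat (Poly_Mapping.single m e * h) = 0"
  unfolding kahler_rels_def
  by (elim UnE CollectE exE conjE; simp add: right_diff_distrib single_mult_Var single_mult_Cst_Var
      phi_hat.diff phi_hat_single phi_monom_add_dl_D del: One_nat_def)

lemma phi_hat_single_mult_kahler_rel_D'_eq_0:
  "h \<in> kahler_rels f D' \<Longrightarrow> (\<And>b. m \<noteq> dl (D b)) \<Longrightarrow> phi_hat (Poly_Mapping.single m e * h) = 0"
  unfolding kahler_rels_def
  by (elim UnE CollectE exE conjE; simp add: right_diff_distrib single_mult_Var single_mult_Cst_Var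
      phi_hat.diff phi_hat_single phi_monom_add_dl_D' del: One_nat_def)

lemma phi_hat_single_mult_kahler_rel:
  assumes "h \<in> kahler_rels f D \<union> kahler_rels f D'"
  shows "phi_hat (Poly_Mapping.single m e * h) \<in> tens_rel f"
  using assms
proof
  assume h: "h \<in> kahler_rels f D"
  show ?thesis
  proof (cases "\<exists>c. m = dl (D' c)")
    case True
    then obtain c where "m = dl (D' c)"
      by blast
    with h show ?thesis
      unfolding tens_rel_def tens_rel_gens_def
      by (auto simp: phi_hat_single_D'_mult_kahler_rel simp del: One_nat_def
          intro!: Aspan_scale_base L_of_D_kahler_rels)
  next
    case False
    with h show ?thesis
      by (simp add: phi_hat_single_mult_kahler_rel_D_eq_0 tens_rel_def Aspan_zero)
  qed
next
  assume h: "h \<in> kahler_rels f D'"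
  show ?thesis
  proof (cases "\<exists>b. m = dl (D b)")
    case True
    then obtain b where "m = dl (D b)"
      by blast
    with h show ?thesis
      unfolding tens_rel_def tens_rel_gens_def
      by (auto simp: phi_hat_single_D_mult_kahler_rel simp del: One_nat_def
          intro!: Aspan_scale_base cA_kahler_rels_D')
  next
    case False
    with h show ?thesis
      by (simp add: phi_hat_single_mult_kahler_rel_D'_eq_0 tens_rel_def Aspan_zero)
  qed
qed

lemma phi_hat_mult_kahler_rel:
  assumes "h \<in> kahler_rels f D \<union> kahler_rels f D'"
  shows "phi_hat (q * h) \<in> tens_rel f"
proof -
  have "phi_hat (q * h)
      = (\<Sum>m\<in>Poly_Mapping.keys q. phi_hat (Poly_Mapping.single m (Poly_Mapping.lookup q m) * h))"
    by (subst poly_mapping_sum_single[of q]) (simp add: sum_distrib_right phi_hat.sum)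
  also have "\<dots> \<in> tens_rel f"
    using phi_hat_single_mult_kahler_rel[OF assms] unfolding tens_rel_def by (rule Aspan_sum)
  finally show ?thesis .
qed

definition phi_torsion :: "'a::comm_ring_1 pol \<Rightarrow> 'a pol" where
  "phi_torsion p = phi_hat (cA (Uprime p)) - phi_hat (Uprime p)"

interpretation phi_torsion: additive phi_torsion
  by unfold_locales (simp add: phi_torsion_def cA_def Uprime_def peval_add phi_hat_add)

lemma phi_torsion_TT_ideal:
  assumes "g \<in> TT_ideal f"
  shows "phi_torsion g \<in> tens_rel f"
proof -
  have "g \<in> module.span (*) (kahler_rels f L \<union> kahler_rels f D)"
    using assms by (simp add: TT_ideal_def Ideal_def)
  then show ?thesis
  proof (induction rule: module.span_induct_alt[OF module_mult, consumes 1, case_names zero step])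
    case zero
    show ?case
      by (simp add: phi_torsion.zero tens_rel_def Aspan_zero)
  next
    case (step q h p)
    have "Uprime h \<in> kahler_rels f D \<union> kahler_rels f D'"
      and "cA (Uprime h) \<in> kahler_rels f D \<union> kahler_rels f D'"
      using \<open>h \<in> _\<close> by (auto dest: Uprime_kahler_rels_L Uprime_kahler_rels_D cA_kahler_rels_D
                                      cA_kahler_rels_D')
    then have "phi_hat (cA (Uprime q) * cA (Uprime h)) - phi_hat (Uprime q * Uprime h) \<in> tens_rel f"
      unfolding tens_rel_def by (intro Aspan_diff phi_hat_mult_kahler_rel[unfolded tens_rel_def])
    then have "phi_torsion (q * h) \<in> tens_rel f"
      by (simp add: phi_torsion_def Uprime_def cA_def peval_mult)
    with \<open>phi_torsion p \<in> tens_rel f\<close> show ?case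
      by (simp add: phi_torsion.add tens_rel_def Aspan_add)
  qed
qed

lemma phi_torsion_L_D:
  "phi_torsion (Cst k * (Var (L b) * Var (D c)))
     = Cst k * (Var (L b) * Var (D c)) - Cst k * (Var (L c) * Var (D b))"
proof -
  have "Uprime (Cst k * (Var (L b) * Var (D c))) = Cst k * (Var (D' b) * Var (D c))"
    by (simp add: Uprime_def peval_mult)
  moreover have "cA (Cst k * (Var (D' b) * Var (D c))) = Cst k * (Var (D b) * Var (D' c))"
    by (simp add: cA_def peval_mult)
  moreover have "phi_hat (Cst k * (Var (D b) * Var (D' c))) = Cst k * (Var (L b) * Var (D c))"
    by (simp only: Cst_mult_Var_mult_Var phi_hat_single phi_monom_D_D' mult.assoc)
  moreover have "phi_hat (Cst k * (Var (D' b) * Var (D c))) = Cst k * (Var (L c) * Var (D b))"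
    by (simp only: Cst_mult_Var_mult_Var phi_hat_single phi_monom_D'_D mult.assoc)
  ultimately show ?thesis
    by (simp only: phi_torsion_def)
qed

lemma phi_torsion_tens_reps:
  assumes "N \<in> tens_reps"
  shows "2 * N - phi_torsion N \<in> wedge_rel f"
proof -
  have "N \<in> module.span (\<lambda>a p. Cst a * p) {Var (L b) * Var (D c) | b c. True}"
    using assms by (simp add: tens_reps_def Aspan_def)
  then show ?thesis
  proof (induction rule: module.span_induct_alt[OF module_Cst_scale, consumes 1, case_names zero step])
    case zero
    show ?case
      by (simp add: phi_torsion.zero wedge_rel_def Aspan_zero)
  next
    case (step k x p)
    then obtain b c where x: "x = Var (L b) * Var (D c)"
      by blast
    have "2 * (Cst k * x + p) - phi_torsion (Cst k * x + p)
        = Cst k * (Var (L b) * Var (D c) + Var (L c) * Var (D b)) + (2 * p - phi_torsion p)"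
      by (simp only: x phi_torsion.add phi_torsion_L_D) (simp add: algebra_simps)
    also have "\<dots> \<in> wedge_rel f"
      using \<open>2 * p - phi_torsion p \<in> wedge_rel f\<close> unfolding wedge_rel_def
      by (intro Aspan_add Aspan_scale_base) auto
    finally show ?case .
  qed
qed

theorem mainTheorem14:
  fixes f :: "'r::comm_ring_1 \<Rightarrow> 'a::comm_ring_1"
    and nabla H :: "'a pol \<Rightarrow> 'a pol"
    and a :: 'a
  assumes "ring_hom_fun f"
    and "module_connection f nabla"
    and "horizontal_part f nabla H"
  shows "wedge_eq f (2 * nabla_hat nabla (Var (D a))) (phi_hat (torsion_V H a))"
proof -
  let ?N = "nabla (Var (D a))" and ?X = "H (Var (DD a))"
  have "Var (D a) \<in> Omega_reps"
    unfolding Omega_reps_def Aspan_def by (rule module.span_base[OF module_Cst_scale]) auto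
  then have "2 * ?N - phi_torsion ?N \<in> wedge_rel f"
    using assms(2) by (intro phi_torsion_tens_reps) (simp add: module_connection_def)
  moreover have "phi_torsion (?X - ?N) \<in> wedge_rel f"
  proof -
    have "?X - ?N \<in> TT_ideal f"
      using assms(3) by (simp add: horizontal_part_def)
    moreover have "tens_rel f \<subseteq> wedge_rel f"
      unfolding tens_rel_def wedge_rel_def by (rule Aspan_mono) auto
    ultimately show ?thesis
      using phi_torsion_TT_ideal by blast
  qed
  ultimately have "2 * ?N - phi_torsion ?X \<in> wedge_rel f"
    using Aspan_diff unfolding wedge_rel_def by (fastforce simp: phi_torsion.diff)
  moreover have "phi_hat (torsion_V H a) = phi_torsion ?X"
    by (simp add: torsion_V_def cA_def phi_torsion_def phi_hat.diff)
  ultimately show ?thesis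
    by (simp add: wedge_eq_def nabla_hat_def)
qed

end
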